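(* Let $s,r\ge 0$ be real numbers, not both zero, and put $\gamma_1(s)=(0,2s,0)$, $\gamma_2(r)=(2r,0,0)\in\mathbb{R}^3$ and $D=\sqrt{r^2+s^2}$. Let $x=(x_1,x_2,x_3)$ and $y=(y_1,y_2,y_3)$ be points of $\mathbb{R}^3$ satisfying \[ \sqrt{(x_1-2r)^2+x_2^2+x_3^2}+\sqrt{x_1^2+(x_2-2s)^2+x_3^2}=\sqrt{(y_1-2r)^2+y_2^2+y_3^2}+\sqrt{y_1^2+(y_2-2s)^2+y_3^2}, \] \[ \frac{x_1-2r}{\sqrt{(x_1-2r)^2+x_2^2+x_3^2}}=\frac{y_1-2r}{\sqrt{(y_1-2r)^2+y_2^2+y_3^2}},\qquad \frac{x_2-2s}{\sqrt{x_1^2+(x_2-2s)^2+x_3^2}}=\frac{y_2-2s}{\sqrt{y_1^2+(y_2-2s)^2+y_3^2}}. \] Define $\rho\ge 0$ by $\cosh\rho=\dfrac{|x-\gamma_1(s)|+|x-\gamma_2(r)|}{2D}$ (the prolate spheroidal "radial" coordinate of $x$ with respect to the foci $\gamma_1(s),\gamma_2(r)$; by the first equation it is the same for $y$). If $\rho>\ln 6$, then either $x=y$ or $x=(y_1,y_2,-y_3)$.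
   Context: This is the setting of multistatic SAR with transmitters on the line $\gamma_1$ and receivers on the perpendicular line $\gamma_2$ in the plane $x_3=0$. The three equations express that the scene points $x$ and $y$ give the same travel time $|\gamma_1(s)-\cdot|+|\cdot-\gamma_2(r)|$ and the same derivatives of this travel time with respect to $s$ and $r$, i.e. they are the conditions for two points of the canonical relation of the forward scattering operator (phase $\omega(t-(|\gamma_1(s)-x|+|x-\gamma_2(r)|)/c_0)$) to project to the same point of the data cotangent space. The conclusion says the only possible artefact is the mirror image across the plane $x_3=0$. *)

theory Defs
  imports Complex_Main
begin

end

theory Submission
  imports Defs
begin

text \<open>Put \<open>a = 2r\<close>, \<open>b = 2s\<close>, let \<open>A\<close>, \<open>B\<close> be the distances of \<open>x\<close> to the foci \<open>(a,0,0)\<close>, \<open>(0,b,0)\<close>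
  and \<open>u = (x\<^sub>1 - a)/A\<close>, \<open>v = (x\<^sub>2 - b)/B\<close> the two direction cosines in the hypotheses. Then
  \<open>x\<^sub>1 = a + A u\<close>, \<open>x\<^sub>2 = b + B v\<close>, and \<open>A\<^sup>2 - B\<^sup>2\<close> is affine in \<open>x\<^sub>1, x\<^sub>2\<close>. Substituting
  \<open>B = S - A\<close> with \<open>S = A + B\<close> turns this into a linear equation
  \<open>A (2S + 2au + 2bv) = S\<^sup>2 - a\<^sup>2 + b\<^sup>2 + 2bSv\<close> whose data \<open>S, u, v\<close> are shared by \<open>x\<close> and \<open>y\<close>.
  Its coefficient is at least \<open>2(S - |a| - |b|)\<close>, which is positive as soon as
  \<open>S = 2D cosh \<rho>\<close> exceeds \<open>|a| + |b| \<le> 4D\<close>; this is where \<open>\<rho> > ln 6\<close> enters (\<open>cosh \<rho> > 2\<close> would do). Hence \<open>A\<close>, \<open>B\<close>,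
  \<open>x\<^sub>1\<close>, \<open>x\<^sub>2\<close> and \<open>x\<^sub>3\<^sup>2\<close> agree for \<open>x\<close> and \<open>y\<close>.\<close>

lemma sqrt_square_add_mult_cosine:
  fixes p q :: real
  assumes "q \<ge> 0"
  shows "sqrt (p\<^sup>2 + q) * (p / sqrt (p\<^sup>2 + q)) = p"
proof (cases "sqrt (p\<^sup>2 + q) = 0")
  case True
  then have "p\<^sup>2 + q = 0" by simp
  with assms have "p = 0" by (metis add_nonneg_eq_0_iff zero_le_power2 power_eq_0_iff)
  then show ?thesis by simp
qed simp

lemma abs_cosine_le_1:
  fixes p q :: real
  assumes "q \<ge> 0"
  shows "\<bar>p / sqrt (p\<^sup>2 + q)\<bar> \<le> 1"
proof -
  have "\<bar>p\<bar> = sqrt (p\<^sup>2)" by simp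
  also have "\<dots> \<le> sqrt (p\<^sup>2 + q)" by (rule real_sqrt_le_mono) (simp add: assms)
  finally show ?thesis using assms by (auto simp: abs_divide divide_le_eq_1 less_le)
qed

lemma bistatic_coordinates:
  fixes a b x1 x2 x3 A B u v :: real
  assumes A_def: "A = sqrt ((x1 - a)\<^sup>2 + x2\<^sup>2 + x3\<^sup>2)" and B_def: "B = sqrt (x1\<^sup>2 + (x2 - b)\<^sup>2 + x3\<^sup>2)"
    and u_def: "u = (x1 - a) / A" and v_def: "v = (x2 - b) / B"
  shows "x1 = a + A * u" and "x2 = b + B * v" and "\<bar>u\<bar> \<le> 1" and "\<bar>v\<bar> \<le> 1"
    and "A * (2 * (A + B) + 2 * a * u + 2 * b * v) = (A + B)\<^sup>2 - a\<^sup>2 + b\<^sup>2 + 2 * b * (A + B) * v"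
proof -
  have A_eq: "A = sqrt ((x1 - a)\<^sup>2 + (x2\<^sup>2 + x3\<^sup>2))" unfolding A_def by (simp add: add.assoc)
  have B_eq: "B = sqrt ((x2 - b)\<^sup>2 + (x1\<^sup>2 + x3\<^sup>2))" unfolding B_def by (simp add: ac_simps)
  show x1: "x1 = a + A * u" and x2: "x2 = b + B * v"
    using sqrt_square_add_mult_cosine[of "x2\<^sup>2 + x3\<^sup>2" "x1 - a"]
      sqrt_square_add_mult_cosine[of "x1\<^sup>2 + x3\<^sup>2" "x2 - b"]
    by (simp_all add: A_eq B_eq u_def v_def)
  show "\<bar>u\<bar> \<le> 1" "\<bar>v\<bar> \<le> 1"
    using abs_cosine_le_1[of "x2\<^sup>2 + x3\<^sup>2" "x1 - a"] abs_cosine_le_1[of "x1\<^sup>2 + x3\<^sup>2" "x2 - b"]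
    by (simp_all add: A_eq B_eq u_def v_def)
  have "A\<^sup>2 - B\<^sup>2 = (x1 - a)\<^sup>2 - x1\<^sup>2 + x2\<^sup>2 - (x2 - b)\<^sup>2"
    by (simp add: A_def B_def)
  also have "\<dots> = a\<^sup>2 - 2 * a * x1 + 2 * b * x2 - b\<^sup>2"
    by (simp add: power2_eq_square algebra_simps)
  also have "\<dots> = - a\<^sup>2 - 2 * a * A * u + b\<^sup>2 + 2 * b * B * v"
    by (simp add: x1 x2 power2_eq_square algebra_simps)
  finally show "A * (2 * (A + B) + 2 * a * u + 2 * b * v) = (A + B)\<^sup>2 - a\<^sup>2 + b\<^sup>2 + 2 * b * (A + B) * v"
    by (simp add: power2_eq_square algebra_simps)
qed

lemma bistatic_data_determine_point_up_to_reflection: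
  fixes a b x1 x2 x3 y1 y2 y3 :: real
  assumes sum: "sqrt ((x1 - a)\<^sup>2 + x2\<^sup>2 + x3\<^sup>2) + sqrt (x1\<^sup>2 + (x2 - b)\<^sup>2 + x3\<^sup>2)
      = sqrt ((y1 - a)\<^sup>2 + y2\<^sup>2 + y3\<^sup>2) + sqrt (y1\<^sup>2 + (y2 - b)\<^sup>2 + y3\<^sup>2)"
    and cos1: "(x1 - a) / sqrt ((x1 - a)\<^sup>2 + x2\<^sup>2 + x3\<^sup>2) = (y1 - a) / sqrt ((y1 - a)\<^sup>2 + y2\<^sup>2 + y3\<^sup>2)"
    and cos2: "(x2 - b) / sqrt (x1\<^sup>2 + (x2 - b)\<^sup>2 + x3\<^sup>2) = (y2 - b) / sqrt (y1\<^sup>2 + (y2 - b)\<^sup>2 + y3\<^sup>2)"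
    and far: "\<bar>a\<bar> + \<bar>b\<bar> < sqrt ((x1 - a)\<^sup>2 + x2\<^sup>2 + x3\<^sup>2) + sqrt (x1\<^sup>2 + (x2 - b)\<^sup>2 + x3\<^sup>2)"
  shows "x1 = y1 \<and> x2 = y2 \<and> (x3 = y3 \<or> x3 = - y3)"
proof -
  define A where "A = sqrt ((x1 - a)\<^sup>2 + x2\<^sup>2 + x3\<^sup>2)"
  define B where "B = sqrt (x1\<^sup>2 + (x2 - b)\<^sup>2 + x3\<^sup>2)"
  define A' where "A' = sqrt ((y1 - a)\<^sup>2 + y2\<^sup>2 + y3\<^sup>2)"
  define B' where "B' = sqrt (y1\<^sup>2 + (y2 - b)\<^sup>2 + y3\<^sup>2)"
  define u where "u = (x1 - a) / A"
  define v where "v = (x2 - b) / B"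
  define S where "S = A + B"
  have x: "x1 = a + A * u" "x2 = b + B * v" "\<bar>u\<bar> \<le> 1" "\<bar>v\<bar> \<le> 1"
    "A * (2 * S + 2 * a * u + 2 * b * v) = S\<^sup>2 - a\<^sup>2 + b\<^sup>2 + 2 * b * S * v"
    using bistatic_coordinates[OF A_def B_def u_def v_def] by (simp_all add: S_def)
  have "u = (y1 - a) / A'" "v = (y2 - b) / B'" "S = A' + B'"
    using cos1 cos2 sum by (simp_all add: A_def B_def A'_def B'_def u_def v_def S_def)
  then have y: "y1 = a + A' * u" "y2 = b + B' * v"
    "A' * (2 * S + 2 * a * u + 2 * b * v) = S\<^sup>2 - a\<^sup>2 + b\<^sup>2 + 2 * b * S * v"
    using bistatic_coordinates[OF A'_def B'_def] by simp_all
  have "\<bar>a * u\<bar> \<le> \<bar>a\<bar>" "\<bar>b * v\<bar> \<le> \<bar>b\<bar>"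
    using x(3,4) by (simp_all add: abs_mult mult_left_le)
  moreover have "\<bar>a\<bar> + \<bar>b\<bar> < S" using far by (simp add: S_def A_def B_def)
  ultimately have "2 * S + 2 * a * u + 2 * b * v \<noteq> 0" by linarith
  then have "A = A'" using x(5) y(3) by (metis mult_right_cancel)
  moreover have "B = B'" using \<open>S = A' + B'\<close> \<open>A = A'\<close> S_def by simp
  ultimately have "x1 = y1" "x2 = y2" using x(1,2) y(1,2) by simp_all
  moreover have "x3\<^sup>2 = y3\<^sup>2"
  proof -
    have "(x1 - a)\<^sup>2 + x2\<^sup>2 + x3\<^sup>2 = (y1 - a)\<^sup>2 + y2\<^sup>2 + y3\<^sup>2"
      using \<open>A = A'\<close> unfolding A_def A'_def by simp
    with \<open>x1 = y1\<close> \<open>x2 = y2\<close> show ?thesis by simp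
  qed
  ultimately show ?thesis by (simp add: power2_eq_iff)
qed

theorem mainTheorem1:
  fixes s r x1 x2 x3 y1 y2 y3 \<rho> :: real
  assumes "s \<ge> 0" and "r \<ge> 0" and "\<not> (s = 0 \<and> r = 0)"
    and eq1: "sqrt ((x1 - 2*r)^2 + x2^2 + x3^2) + sqrt (x1^2 + (x2 - 2*s)^2 + x3^2)
            = sqrt ((y1 - 2*r)^2 + y2^2 + y3^2) + sqrt (y1^2 + (y2 - 2*s)^2 + y3^2)"
    and eq2: "(x1 - 2*r) / sqrt ((x1 - 2*r)^2 + x2^2 + x3^2)
            = (y1 - 2*r) / sqrt ((y1 - 2*r)^2 + y2^2 + y3^2)"
    and eq3: "(x2 - 2*s) / sqrt (x1^2 + (x2 - 2*s)^2 + x3^2)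
            = (y2 - 2*s) / sqrt (y1^2 + (y2 - 2*s)^2 + y3^2)"
    and rho_nonneg: "\<rho> \<ge> 0"
    and rho_def: "cosh \<rho> = (sqrt (x1^2 + (x2 - 2*s)^2 + x3^2) + sqrt ((x1 - 2*r)^2 + x2^2 + x3^2))
                              / (2 * sqrt (r^2 + s^2))"
    and rho_big: "\<rho> > ln 6"
  shows "(x1 = y1 \<and> x2 = y2 \<and> x3 = y3) \<or> (x1 = y1 \<and> x2 = y2 \<and> x3 = - y3)"
proof -
  define D where "D = sqrt (r\<^sup>2 + s\<^sup>2)"
  have "D > 0" using assms(3) by (auto simp: D_def sum_power2_gt_zero_iff)
  have "cosh (ln 6) < cosh \<rho>" using rho_big rho_nonneg by (simp add: cosh_real_nonneg_less_iff)
  then have "3 < cosh \<rho>" by (simp add: cosh_ln_real)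
  have "\<bar>2*r\<bar> + \<bar>2*s\<bar> \<le> 4 * D"
    using assms(1,2) real_sqrt_sum_squares_ge1[of r s] real_sqrt_sum_squares_ge2[of s r]
    unfolding D_def by linarith
  also have "\<dots> < 2 * D * cosh \<rho>" using \<open>3 < cosh \<rho>\<close> \<open>D > 0\<close> by simp
  also have "\<dots> = sqrt ((x1 - 2*r)^2 + x2^2 + x3^2) + sqrt (x1^2 + (x2 - 2*s)^2 + x3^2)"
    using \<open>D > 0\<close> by (simp add: rho_def D_def[symmetric] add.commute)
  finally have far: "\<bar>2*r\<bar> + \<bar>2*s\<bar> < sqrt ((x1 - 2*r)^2 + x2^2 + x3^2) + sqrt (x1^2 + (x2 - 2*s)^2 + x3^2)" .
  show ?thesis using bistatic_data_determine_point_up_to_reflection[OF eq1 eq2 eq3 far] by blast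
qed

end
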